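(* Assume that for every $k\ge 1$ the function $\hat{\mathcal L}(\cdot,y_k)$ is convex, that $\tau_1\tau_2\|K\|^2\le 1/4$ and $\tau_1\le 1/(4L)$. For $k\ge1$ define \[\varepsilon_k:=\hat{\mathcal L}(x_k,y_k)-\ell_{\hat{\mathcal L}(\cdot,y_k)}(x_k;x_{k-1}).\] Let $(x_*,y_* )$ be a saddle point of $\Phi$. Then: (a) for every $k\ge1$, \[r^y_k:=\frac{y^{k-1}-y^k}{\tau_2}\in\partial\big[-\hat{\mathcal L}(x_k,\cdot)+h_2\big](y_k),\qquad r^x_k:=\frac{x_{k-1}-x_k}{\tau_1}\in\partial_{\varepsilon_k}\big[\hat{\mathcal L}(\cdot,y_k)+h_1\big](x_k);\] (b) for every $k\ge1$, $\varepsilon_k\le \frac{1}{8\tau_1}\|x_k-x_{k-1}\|^2$ and $\frac{1}{\tau_2}\|y^k-y_k\|^2\le\frac{1}{4\tau_1}\|x_k-x_{k-1}\|^2$; (c) for every $N\ge1$, \[\frac{1}{4\tau_1}\sum_{k=1}^N\|x_k-x_{k-1}\|^2+\frac{1}{2\tau_2}\sum_{k=1}^N\|y_k-y^{k-1}\|^2\le\frac{1}{2\tau_1}\|x_*-x_0\|^2+\frac{1}{2\tau_2}\|y_*-y_0\|^2.\]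
   Context: Let $n,m_1,m_2$ be positive integers, $Q\in\mathbb R^{n\times n}$ symmetric, $c\in\mathbb R^n$, $A\in\mathbb R^{m_1\times n}$, $b\in\mathbb R^{m_1}$, $B\in\mathbb R^{m_2\times n}$, $d\in\mathbb R^{m_2}$. Let $K:=-\begin{pmatrix}A\\ B\end{pmatrix}\in\mathbb R^{(m_1+m_2)\times n}$ and $r:=(b;d)\in\mathbb R^{m_1+m_2}$. Fix $\rho\ge0$ and let $\mathbf 1$ be the all-ones vector. For $x\in\mathbb R^n$, $y\in\mathbb R^{m_1+m_2}$ define $\hat{\mathcal L}(x,y):=\langle x,Qx\rangle+\langle c,x\rangle+\langle y,Kx+r\rangle+\rho\langle x,\mathbf 1-x\rangle$, so $\nabla_x\hat{\mathcal L}(x,y)=c+\rho\mathbf 1+K^\top y+2Qx-2\rho x$ and $\nabla_y\hat{\mathcal L}(x,y)=Kx+r$. Let $Y:=\mathbb R_+^{m_1}\times\mathbb R^{m_2}$, $h_1$ the indicator of $[0,1]^n$ and $h_2$ the indicator of $Y$ (value $0$ on the set, $+\infty$ outside), and $\Phi(x,y):=\hat{\mathcal L}(x,y)+h_1(x)-h_2(y)$. A saddle point $(x_*,y_* )$ of $\Phi$ satisfies $\Phi(x_*,y)\le\Phi(x_*,y_* )\le\Phi(x,y_* )$ for all $x,y$. Let $L:=2(\|Q\|+\rho)$, where $\|\cdot\|$ on matrices is the spectral norm. For differentiable $f$, $\ell_f(x;x'):=f(x')+\langle\nabla f(x'),x-x'\rangle$. For a convex function $g$, $\partial g$ is its subdifferential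 and $\partial_\varepsilon g(x):=\{v: g(z)\ge g(x)+\langle v,z-x\rangle-\varepsilon\ \forall z\}$. PDHG iterates with step sizes $\tau_1,\tau_2>0$: choose $x_0\in[0,1]^n$, $y_0\in\mathbb R^{m_1+m_2}$, set $x_{-1}:=x_0$, $\bar x_0:=x_0$, and for $k\ge1$: $y_k=\Pi_Y(y_{k-1}+\tau_2(K\bar x_{k-1}+r))$, $x_k=\Pi_{[0,1]^n}(x_{k-1}-\tau_1\nabla_x\hat{\mathcal L}(x_{k-1},y_k))$, $\bar x_k=2x_k-x_{k-1}$, where $\Pi$ denotes Euclidean projection. Auxiliary sequence: $y^0:=y_0$ and $y^k:=y_k+\tau_2K(\bar x_k-x_k)$ for $k\ge1$. *)

theory Defs
  imports "HOL-Analysis.Analysis"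
begin

text \<open>Dual variables y = (y1, y2) with y1 in R^m1 (inequality block), y2 in R^m2 (equality block).
  K = -(A;B), r = (b;d).\<close>

definition Kop :: "real^'n^'m1 \<Rightarrow> real^'n^'m2 \<Rightarrow> real^'n \<Rightarrow> ((real^'m1) \<times> (real^'m2))" where
  "Kop A B x = (- (A *v x), - (B *v x))"

definition KTop :: "real^'n^'m1 \<Rightarrow> real^'n^'m2 \<Rightarrow> ((real^'m1) \<times> (real^'m2)) \<Rightarrow> real^'n" where
  "KTop A B y = - (transpose A *v fst y + transpose B *v snd y)"

definition ones :: "real^'n" where "ones = (\<chi> i. 1)"

definition Lhat :: "real^'n^'n \<Rightarrow> real^'n \<Rightarrow> real^'n^'m1 \<Rightarrow> real^'m1 \<Rightarrow> real^'n^'m2 \<Rightarrow> real^'m2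
    \<Rightarrow> real \<Rightarrow> real^'n \<Rightarrow> ((real^'m1) \<times> (real^'m2)) \<Rightarrow> real" where
  "Lhat Q c A b B d \<rho> x y = x \<bullet> (Q *v x) + c \<bullet> x + y \<bullet> (Kop A B x + (b, d)) + \<rho> * (x \<bullet> (ones - x))"

definition gradx :: "real^'n^'n \<Rightarrow> real^'n \<Rightarrow> real^'n^'m1 \<Rightarrow> real^'n^'m2
    \<Rightarrow> real \<Rightarrow> real^'n \<Rightarrow> ((real^'m1) \<times> (real^'m2)) \<Rightarrow> real^'n" where
  "gradx Q c A B \<rho> x y = c + \<rho> *\<^sub>R ones + KTop A B y + 2 *\<^sub>R (Q *v x) - (2 * \<rho>) *\<^sub>R x"

definition boxset :: "(real^'n) set" where "boxset = {x. \<forall>i. 0 \<le> x $ i \<and> x $ i \<le> 1}"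

definition Yset :: "((real^'m1) \<times> (real^'m2)) set" where "Yset = {y. \<forall>i. 0 \<le> fst y $ i}"

definition h1 :: "real^'n \<Rightarrow> ereal" where "h1 x = (if x \<in> boxset then 0 else \<infinity>)"
definition h2 :: "((real^'m1) \<times> (real^'m2)) \<Rightarrow> ereal" where "h2 y = (if y \<in> Yset then 0 else \<infinity>)"

definition Phi where
  "Phi Q c A b B d \<rho> x y = ereal (Lhat Q c A b B d \<rho> x y) + h1 x - h2 y"

definition saddle_point where
  "saddle_point Q c A b B d \<rho> xs ys \<longleftrightarrow>
     (\<forall>x y. Phi Q c A b B d \<rho> xs y \<le> Phi Q c A b B d \<rho> xs ys \<and>
            Phi Q c A b B d \<rho> xs ys \<le> Phi Q c A b B d \<rho> x ys)"

definition subdiff :: "('a::real_inner \<Rightarrow> ereal) \<Rightarrow> 'a \<Rightarrow> 'a set" where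
  "subdiff g x = {v. \<forall>z. g z \<ge> g x + ereal (v \<bullet> (z - x))}"

definition eps_subdiff :: "real \<Rightarrow> ('a::real_inner \<Rightarrow> ereal) \<Rightarrow> 'a \<Rightarrow> 'a set" where
  "eps_subdiff \<epsilon> g x = {v. \<forall>z. g z \<ge> g x + ereal (v \<bullet> (z - x)) - ereal \<epsilon>}"

definition xbar :: "(nat \<Rightarrow> real^'n) \<Rightarrow> nat \<Rightarrow> real^'n" where
  "xbar x k = (if k = 0 then x 0 else 2 *\<^sub>R x k - x (k - 1))"

definition yaux where
  "yaux A B \<tau>2 x y k = (if k = 0 then y 0 else y k + \<tau>2 *\<^sub>R Kop A B (xbar x k - x k))"

end

theory Submission
  imports Defs
begin

(* Both updates are projections onto closed convex sets, and the variational inequality of the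
   projection turns each of them into a subgradient inequality.  In the primal step the gradient is
   taken at x_{k-1}; as Lhat(., y) is quadratic, its exact Taylor remainder
   q h = <h, Q h> - rho |h|^2 is nonnegative by convexity and at most |h|^2 / (8 tau1) by the step
   size, so the primal inequality holds up to eps_k = q (x_k - x_{k-1}).  Testing both inequalities
   at the saddle point (xs, ys) and adding them, the inequality Lhat(xs, y_k) <= Lhat(x_k, ys) removes
   all function values; the three-point identity then turns the remaining inner products into the
   decrease of V_k = |x_k - xs|^2 / (2 tau1) + |y^k - ys|^2 / (2 tau2), up to error terms that the
   bounds in (b) absorb.  Summing the telescoping decrease gives (c). *)

lemma inner_diff_diff_eq_norms:
  fixes p q s t :: "'a::real_inner"
  shows "(p - q) \<bullet> (s - t)
    = ((norm (t - p))\<^sup>2 + (norm (q - s))\<^sup>2 - (norm (p - s))\<^sup>2 - (norm (q - t))\<^sup>2) / 2"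
  by (simp add: power2_norm_eq_inner inner_diff_left inner_diff_right inner_commute algebra_simps)

lemma convex_on_quadratic_remainder_nonneg:
  fixes f :: "'a::real_inner \<Rightarrow> real"
  assumes "convex_on UNIV f"
    and expand: "\<And>h. f (u + h) = f u + g \<bullet> h + q h"
    and homogeneous: "\<And>s. q (s *\<^sub>R h) = s\<^sup>2 * q h"
  shows "0 \<le> q h"
proof -
  have "(1 - 1/2) *\<^sub>R u + (1/2) *\<^sub>R (u + h) = u + (1/2::real) *\<^sub>R h"
    by (simp add: algebra_simps flip: scaleR_add_left)
  then have "f (u + (1/2) *\<^sub>R h) \<le> (1 - 1/2) * f u + (1/2) * f (u + h)"
    using convex_onD[OF assms(1), of "1/2" u "u + h"] by simp
  then show ?thesis
    using expand[of "(1/2) *\<^sub>R h"] expand[of h] homogeneous[of "1/2"]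
    by (simp add: power2_eq_square field_simps)
qed

lemma inner_symmetric_matrix:
  fixes Q :: "real^'n^'n"
  assumes "transpose Q = Q"
  shows "u \<bullet> (Q *v v) = v \<bullet> (Q *v u)"
  by (metis assms dot_lmul_matrix inner_commute vector_transpose_matrix)

lemma boxset_eq_cbox: "boxset = cbox 0 ones"
  by (auto simp: boxset_def mem_box_cart ones_def)

lemma Yset_eq_Times: "Yset = {0..} \<times> UNIV"
  by (auto simp: Yset_def less_eq_vec_def)

lemma convex_boxset: "convex boxset"
  and closed_boxset: "closed boxset"
  and zero_in_boxset: "0 \<in> boxset"
  by (auto simp: boxset_eq_cbox mem_box_cart ones_def)

lemma convex_Yset: "convex Yset"
  and closed_Yset: "closed Yset"
  and zero_in_Yset: "0 \<in> Yset"
proof -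
  have "convex {0::real^'m1..}"
    by (auto simp: convex_def less_eq_vec_def)
  then show "convex Yset" and "closed Yset" and "0 \<in> Yset"
    by (auto simp: Yset_eq_Times zero_prod_def intro!: convex_Times closed_Times)
qed

lemma bounded_linear_Kop: "bounded_linear (Kop A B)"
  unfolding Kop_def[abs_def]
  by (intro bounded_linear_Pair bounded_linear_minus matrix_vector_mul_bounded_linear)

lemma inner_Kop: "w \<bullet> Kop A B u = KTop A B w \<bullet> u"
  by (cases w) (simp add: Kop_def KTop_def inner_diff_left dot_lmul_matrix)

lemma Lhat_taylor:
  assumes "transpose Q = Q"
  shows "Lhat Q c A b B d \<rho> (u + h) w = Lhat Q c A b B d \<rho> u w + gradx Q c A B \<rho> u w \<bullet> h
    + (h \<bullet> (Q *v h) - \<rho> * (h \<bullet> h))"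
  using inner_symmetric_matrix[OF assms, of u h]
    linear_add[OF bounded_linear.linear[OF bounded_linear_Kop], of A B u h]
  by (simp add: Lhat_def gradx_def matrix_vector_right_distrib inner_add_left inner_add_right
      inner_diff_left inner_diff_right inner_Kop algebra_simps inner_commute)

lemma Lhat_diff_dual:
  "Lhat Q c A b B d \<rho> u v - Lhat Q c A b B d \<rho> u w = (v - w) \<bullet> (Kop A B u + (b, d))"
  by (simp add: Lhat_def inner_diff_left)

lemma subdiff_plus_h2I:
  assumes "w \<in> Yset" and "\<And>v. v \<in> Yset \<Longrightarrow> F w + g \<bullet> (v - w) \<le> F v"
  shows "g \<in> subdiff (\<lambda>v. ereal (F v) + h2 v) w"
  using assms by (auto simp: subdiff_def h2_def)

lemma eps_subdiff_plus_h1I: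
  assumes "u \<in> boxset" and "\<And>z. z \<in> boxset \<Longrightarrow> F u + g \<bullet> (z - u) - \<epsilon> \<le> F z"
  shows "g \<in> eps_subdiff \<epsilon> (\<lambda>z. ereal (F z) + h1 z) u"
  using assms by (auto simp: eps_subdiff_def h1_def)

lemma saddle_point_feasible:
  assumes "saddle_point Q c A b B d \<rho> xs ys"
  shows "xs \<in> boxset" and "ys \<in> Yset"
proof -
  have "Phi Q c A b B d \<rho> xs ys \<le> Phi Q c A b B d \<rho> 0 ys"
    using assms by (simp add: saddle_point_def)
  moreover have "Phi Q c A b B d \<rho> 0 ys < \<infinity>"
    using zero_in_boxset by (simp add: Phi_def h1_def h2_def)
  ultimately show xs: "xs \<in> boxset"
    using zero_in_boxset by (auto simp: Phi_def h1_def h2_def split: if_splits)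
  have "Phi Q c A b B d \<rho> xs 0 \<le> Phi Q c A b B d \<rho> xs ys"
    using assms unfolding saddle_point_def by blast
  then show "ys \<in> Yset"
    using xs zero_in_Yset by (auto simp: Phi_def h1_def h2_def split: if_splits)
qed

lemma saddle_point_Lhat_le:
  assumes "saddle_point Q c A b B d \<rho> xs ys" "u \<in> boxset" "v \<in> Yset"
  shows "Lhat Q c A b B d \<rho> xs v \<le> Lhat Q c A b B d \<rho> u ys"
proof -
  have "Phi Q c A b B d \<rho> xs v \<le> Phi Q c A b B d \<rho> u ys"
    using assms(1) unfolding saddle_point_def by (meson order.trans)
  then show ?thesis
    using assms saddle_point_feasible[OF assms(1)] by (simp add: Phi_def h1_def h2_def)
qed

locale pdhg =
  fixes Q :: "real^'n^'n" and c :: "real^'n"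
    and A :: "real^'n^'m1" and b :: "real^'m1"
    and B :: "real^'n^'m2" and d :: "real^'m2"
    and \<rho> \<tau>1 \<tau>2 :: real
    and x :: "nat \<Rightarrow> real^'n" and y :: "nat \<Rightarrow> (real^'m1) \<times> (real^'m2)"
  assumes Q_symmetric: "transpose Q = Q"
    and rho_nonneg: "\<rho> \<ge> 0"
    and tau1_pos: "\<tau>1 > 0" and tau2_pos: "\<tau>2 > 0"
    and x0_in_boxset: "x 0 \<in> boxset"
    and y_update: "\<And>k. k \<ge> 1 \<Longrightarrow>
       y k = closest_point Yset (y (k - 1) + \<tau>2 *\<^sub>R (Kop A B (xbar x (k - 1)) + (b, d)))"
    and x_update: "\<And>k. k \<ge> 1 \<Longrightarrow>
       x k = closest_point boxset (x (k - 1) - \<tau>1 *\<^sub>R gradx Q c A B \<rho> (x (k - 1)) (y k))"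
    and convex_Lhat: "\<And>k. k \<ge> 1 \<Longrightarrow> convex_on UNIV (\<lambda>u. Lhat Q c A b B d \<rho> u (y k))"
    and step_size_K: "\<tau>1 * \<tau>2 * (onorm (Kop A B))\<^sup>2 \<le> 1 / 4"
    and step_size_L: "4 * \<tau>1 * (2 * (onorm (\<lambda>v. Q *v v) + \<rho>)) \<le> 1"
begin

abbreviation "L \<equiv> Lhat Q c A b B d \<rho>"
abbreviation "grad \<equiv> gradx Q c A B \<rho>"
abbreviation "K \<equiv> Kop A B"
abbreviation "ya \<equiv> yaux A B \<tau>2 x y"

interpretation K: bounded_linear K
  by (rule bounded_linear_Kop)

definition linearization_error :: "nat \<Rightarrow> real" where
  "linearization_error k = L (x k) (y k) - (L (x (k - 1)) (y k) + grad (x (k - 1)) (y k) \<bullet> (x k - x (k - 1)))"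

lemma x_in_boxset: "x k \<in> boxset"
  using x0_in_boxset x_update[of k] closest_point_in_set[OF closed_boxset] zero_in_boxset
  by (cases "k = 0") auto

lemma y_in_Yset: "k \<ge> 1 \<Longrightarrow> y k \<in> Yset"
  by (metis closed_Yset zero_in_Yset closest_point_in_set empty_iff y_update)

lemma yaux_eq: "k \<ge> 1 \<Longrightarrow> ya k = y k + \<tau>2 *\<^sub>R K (x k - x (k - 1))"
  by (simp add: yaux_def xbar_def scaleR_2 algebra_simps)

(* In terms of y^k the dual step is a projected ascent step taken at x_k rather than at the
   extrapolated point xbar_{k-1}. *)
lemma yaux_diff_eq:
  assumes "k \<ge> 1"
  shows "ya (k - 1) - ya k + \<tau>2 *\<^sub>R (K (x k) + (b, d))
    = y (k - 1) + \<tau>2 *\<^sub>R (K (xbar x (k - 1)) + (b, d)) - y k"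
proof (cases "k = 1")
  case True
  then show ?thesis
    by (simp add: yaux_def xbar_def K.diff K.scaleR scaleR_2 algebra_simps)
next
  case False
  define j where "j = k - 2"
  have k: "k = Suc (Suc j)"
    using assms False by (simp add: j_def)
  have "xbar x (Suc j) = x (Suc j) + x (Suc j) - x j"
    unfolding xbar_def scaleR_2 by simp
  then show ?thesis
    unfolding k diff_Suc_1 yaux_eq[of "Suc j", simplified] yaux_eq[of "Suc (Suc j)", simplified]
    by (simp only: K.diff K.add) (simp add: algebra_simps)
qed

lemma linearization_error_eq:
  "linearization_error k
    = (x k - x (k - 1)) \<bullet> (Q *v (x k - x (k - 1))) - \<rho> * ((x k - x (k - 1)) \<bullet> (x k - x (k - 1)))"
  using Lhat_taylor[OF Q_symmetric, of c A b B d \<rho> "x (k - 1)" "x k - x (k - 1)" "y k"]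
  by (simp add: linearization_error_def)

lemma Lhat_remainder_nonneg:
  assumes "(k::nat) \<ge> 1"
  shows "0 \<le> h \<bullet> (Q *v h) - \<rho> * (h \<bullet> h)"
  using convex_on_quadratic_remainder_nonneg[OF convex_Lhat[OF assms] Lhat_taylor[OF Q_symmetric]]
  by (simp add: matrix_vector_mult_scaleR power2_eq_square algebra_simps)

lemma primal_step_ineq:
  assumes "k \<ge> 1" "z \<in> boxset"
  shows "L (x k) (y k) + ((1 / \<tau>1) *\<^sub>R (x (k - 1) - x k)) \<bullet> (z - x k) - linearization_error k
    \<le> L z (y k)"
proof -
  let ?g = "grad (x (k - 1)) (y k)"
  have "(x (k - 1) - \<tau>1 *\<^sub>R ?g - x k) \<bullet> (z - x k) \<le> 0"
    unfolding x_update[OF assms(1)] by (rule closest_point_dot[OF convex_boxset closed_boxset assms(2)])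
  then have "(x (k - 1) - x k) \<bullet> (z - x k) - \<tau>1 * (?g \<bullet> (z - x k)) \<le> 0"
    by (simp add: inner_diff_left)
  then have "(1 / \<tau>1) * ((x (k - 1) - x k) \<bullet> (z - x k)) \<le> ?g \<bullet> (z - x k)"
    using tau1_pos by (simp add: field_simps)
  moreover have "L z (y k) \<ge> L (x (k - 1)) (y k) + ?g \<bullet> (z - x (k - 1))"
    using Lhat_taylor[OF Q_symmetric, of c A b B d \<rho> "x (k - 1)" "z - x (k - 1)" "y k"]
      Lhat_remainder_nonneg[OF assms(1), of "z - x (k - 1)"]
    by simp
  ultimately show ?thesis
    by (simp add: linearization_error_def inner_diff_right diff_divide_distrib)
qed

lemma dual_step_ineq:
  assumes "k \<ge> 1" "v \<in> Yset"
  shows "- L (x k) (y k) + ((1 / \<tau>2) *\<^sub>R (ya (k - 1) - ya k)) \<bullet> (v - y k) \<le> - L (x k) v"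
proof -
  have "(ya (k - 1) - ya k + \<tau>2 *\<^sub>R (K (x k) + (b, d))) \<bullet> (v - y k) \<le> 0"
    unfolding yaux_diff_eq[OF assms(1)] y_update[OF assms(1)]
    by (rule closest_point_dot[OF convex_Yset closed_Yset assms(2)])
  then have "(ya (k - 1) - ya k) \<bullet> (v - y k) + \<tau>2 * ((K (x k) + (b, d)) \<bullet> (v - y k)) \<le> 0"
    by (simp only: inner_add_left inner_scaleR_left)
  then have "(1 / \<tau>2) * ((ya (k - 1) - ya k) \<bullet> (v - y k)) + (v - y k) \<bullet> (K (x k) + (b, d)) \<le> 0"
    using tau2_pos by (simp add: inner_commute field_simps)
  then show ?thesis
    using Lhat_diff_dual[of Q c A b B d \<rho> "x k" v "y k"] by simp
qed

lemma dual_residual_in_subdiff: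
  "k \<ge> 1 \<Longrightarrow> (1 / \<tau>2) *\<^sub>R (ya (k - 1) - ya k) \<in> subdiff (\<lambda>v. ereal (- L (x k) v) + h2 v) (y k)"
  by (intro subdiff_plus_h2I y_in_Yset dual_step_ineq)

lemma primal_residual_in_eps_subdiff:
  "k \<ge> 1 \<Longrightarrow> (1 / \<tau>1) *\<^sub>R (x (k - 1) - x k)
    \<in> eps_subdiff (linearization_error k) (\<lambda>u. ereal (L u (y k)) + h1 u) (x k)"
  by (intro eps_subdiff_plus_h1I x_in_boxset primal_step_ineq)

lemma linearization_error_le: "linearization_error k \<le> 1 / (8 * \<tau>1) * (norm (x k - x (k - 1)))\<^sup>2"
proof -
  let ?h = "x k - x (k - 1)"
  have "onorm (\<lambda>v. Q *v v) \<le> 1 / (8 * \<tau>1)"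
    using step_size_L mult_nonneg_nonneg[OF rho_nonneg less_imp_le[OF tau1_pos]] tau1_pos
    by (simp add: field_simps)
  have "?h \<bullet> (Q *v ?h) \<le> norm ?h * norm (Q *v ?h)"
    by (rule norm_cauchy_schwarz)
  also have "\<dots> \<le> norm ?h * (onorm (\<lambda>v. Q *v v) * norm ?h)"
    using onorm[OF matrix_vector_mul_bounded_linear[of Q]] by (intro mult_left_mono) auto
  also have "\<dots> = onorm (\<lambda>v. Q *v v) * (norm ?h)\<^sup>2"
    by (simp add: power2_eq_square)
  also have "\<dots> \<le> 1 / (8 * \<tau>1) * (norm ?h)\<^sup>2"
    using \<open>onorm (\<lambda>v. Q *v v) \<le> 1 / (8 * \<tau>1)\<close> by (intro mult_right_mono) auto
  finally have "?h \<bullet> (Q *v ?h) \<le> 1 / (8 * \<tau>1) * (norm ?h)\<^sup>2" .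
  moreover have "0 \<le> \<rho> * (?h \<bullet> ?h)"
    using rho_nonneg by simp
  ultimately show ?thesis
    by (simp add: linearization_error_eq)
qed

lemma yaux_dist_le:
  assumes "k \<ge> 1"
  shows "1 / \<tau>2 * (norm (ya k - y k))\<^sup>2 \<le> 1 / (4 * \<tau>1) * (norm (x k - x (k - 1)))\<^sup>2"
proof -
  let ?h = "x k - x (k - 1)"
  have "1 / \<tau>2 * (norm (ya k - y k))\<^sup>2 = \<tau>2 * (norm (K ?h))\<^sup>2"
    using tau2_pos by (simp add: yaux_eq[OF assms] power2_eq_square)
  also have "\<dots> \<le> \<tau>2 * (onorm K * norm ?h)\<^sup>2"
    using onorm[OF bounded_linear_Kop] tau2_pos by (intro mult_left_mono power_mono) auto
  also have "\<dots> = (\<tau>2 * (onorm K)\<^sup>2) * (norm ?h)\<^sup>2"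
    by (simp add: power_mult_distrib)
  also have "\<dots> \<le> 1 / (4 * \<tau>1) * (norm ?h)\<^sup>2"
    using step_size_K tau1_pos by (intro mult_right_mono) (auto simp: field_simps)
  finally show ?thesis .
qed

definition lyapunov :: "real^'n \<Rightarrow> (real^'m1) \<times> (real^'m2) \<Rightarrow> nat \<Rightarrow> real" where
  "lyapunov xs ys k = 1 / (2 * \<tau>1) * (norm (x k - xs))\<^sup>2 + 1 / (2 * \<tau>2) * (norm (ya k - ys))\<^sup>2"

lemma lyapunov_nonneg: "0 \<le> lyapunov xs ys k"
  unfolding lyapunov_def using tau1_pos tau2_pos by (intro add_nonneg_nonneg mult_nonneg_nonneg) auto

lemma lyapunov_decrease:
  assumes saddle: "saddle_point Q c A b B d \<rho> xs ys" and k: "k \<ge> 1"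
  shows "1 / (4 * \<tau>1) * (norm (x k - x (k - 1)))\<^sup>2 + 1 / (2 * \<tau>2) * (norm (y k - ya (k - 1)))\<^sup>2
    \<le> lyapunov xs ys (k - 1) - lyapunov xs ys k"
proof -
  have primal: "(x (k - 1) - x k) \<bullet> (xs - x k)
      = ((norm (x k - x (k - 1)))\<^sup>2 + (norm (x k - xs))\<^sup>2 - (norm (x (k - 1) - xs))\<^sup>2) / 2"
    using inner_diff_diff_eq_norms[of "x (k - 1)" "x k" xs "x k"] by simp
  have dual: "(ya (k - 1) - ya k) \<bullet> (ys - y k)
      = ((norm (y k - ya (k - 1)))\<^sup>2 + (norm (ya k - ys))\<^sup>2 - (norm (ya (k - 1) - ys))\<^sup>2
         - (norm (ya k - y k))\<^sup>2) / 2"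
    by (rule inner_diff_diff_eq_norms)
  have "L xs (y k) \<le> L (x k) ys"
    by (rule saddle_point_Lhat_le[OF saddle x_in_boxset y_in_Yset[OF k]])
  then have "(1 / \<tau>1) * ((x (k - 1) - x k) \<bullet> (xs - x k))
      + (1 / \<tau>2) * ((ya (k - 1) - ya k) \<bullet> (ys - y k)) \<le> linearization_error k"
    using primal_step_ineq[OF k saddle_point_feasible(1)[OF saddle]]
      dual_step_ineq[OF k saddle_point_feasible(2)[OF saddle]]
    by simp
  then show ?thesis
    using linearization_error_le[of k] yaux_dist_le[OF k]
    unfolding primal dual lyapunov_def by argo
qed

lemma sum_step_lengths_le:
  assumes "saddle_point Q c A b B d \<rho> xs ys"
  shows "1 / (4 * \<tau>1) * (\<Sum>k=1..N. (norm (x k - x (k - 1)))\<^sup>2)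
      + 1 / (2 * \<tau>2) * (\<Sum>k=1..N. (norm (y k - ya (k - 1)))\<^sup>2)
    \<le> 1 / (2 * \<tau>1) * (norm (xs - x 0))\<^sup>2 + 1 / (2 * \<tau>2) * (norm (ys - y 0))\<^sup>2"
proof -
  have "1 / (4 * \<tau>1) * (\<Sum>k=1..N. (norm (x k - x (k - 1)))\<^sup>2)
      + 1 / (2 * \<tau>2) * (\<Sum>k=1..N. (norm (y k - ya (k - 1)))\<^sup>2)
    = (\<Sum>k=1..N. 1 / (4 * \<tau>1) * (norm (x k - x (k - 1)))\<^sup>2
      + 1 / (2 * \<tau>2) * (norm (y k - ya (k - 1)))\<^sup>2)"
    by (simp add: sum.distrib sum_distrib_left)
  also have "\<dots> \<le> (\<Sum>k=1..N. lyapunov xs ys (k - 1) - lyapunov xs ys k)"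
    by (intro sum_mono lyapunov_decrease[OF assms]) simp
  also have "\<dots> = lyapunov xs ys 0 - lyapunov xs ys N"
    using sum_telescope''[of 0 N "\<lambda>k. - lyapunov xs ys k"] by simp
  also have "\<dots> \<le> lyapunov xs ys 0"
    using lyapunov_nonneg[of xs ys N] by simp
  also have "\<dots> = 1 / (2 * \<tau>1) * (norm (xs - x 0))\<^sup>2 + 1 / (2 * \<tau>2) * (norm (ys - y 0))\<^sup>2"
    by (simp add: lyapunov_def yaux_def norm_minus_commute)
  finally show ?thesis .
qed

end

theorem mainTheorem1:
  fixes Q :: "real^'n^'n" and c :: "real^'n"
    and A :: "real^'n^'m1" and b :: "real^'m1"
    and B :: "real^'n^'m2" and d :: "real^'m2"
    and \<rho> \<tau>1 \<tau>2 :: real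
    and x :: "nat \<Rightarrow> real^'n" and y :: "nat \<Rightarrow> (real^'m1) \<times> (real^'m2)"
    and xs :: "real^'n" and ys :: "(real^'m1) \<times> (real^'m2)"
  assumes Qsym: "transpose Q = Q"
    and rho: "\<rho> \<ge> 0"
    and tau: "\<tau>1 > 0" "\<tau>2 > 0"
    and x0: "x 0 \<in> boxset"
    and yk: "\<And>k. k \<ge> 1 \<Longrightarrow>
       y k = closest_point Yset (y (k - 1) + \<tau>2 *\<^sub>R (Kop A B (xbar x (k - 1)) + (b, d)))"
    and xk: "\<And>k. k \<ge> 1 \<Longrightarrow>
       x k = closest_point boxset (x (k - 1) - \<tau>1 *\<^sub>R gradx Q c A B \<rho> (x (k - 1)) (y k))"
    and conv: "\<And>k. k \<ge> 1 \<Longrightarrow> convex_on UNIV (\<lambda>u. Lhat Q c A b B d \<rho> u (y k))"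
    and step1: "\<tau>1 * \<tau>2 * (onorm (Kop A B))\<^sup>2 \<le> 1 / 4"
    and step2: "4 * \<tau>1 * (2 * (onorm (\<lambda>v. Q *v v) + \<rho>)) \<le> 1"
    and saddle: "saddle_point Q c A b B d \<rho> xs ys"
  defines "eps \<equiv> \<lambda>k. Lhat Q c A b B d \<rho> (x k) (y k)
             - (Lhat Q c A b B d \<rho> (x (k - 1)) (y k)
                + gradx Q c A B \<rho> (x (k - 1)) (y k) \<bullet> (x k - x (k - 1)))"
  shows
    "(\<forall>k\<ge>1.
        (1 / \<tau>2) *\<^sub>R (yaux A B \<tau>2 x y (k - 1) - yaux A B \<tau>2 x y k)
          \<in> subdiff (\<lambda>v. ereal (- Lhat Q c A b B d \<rho> (x k) v) + h2 v) (y k)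
      \<and> (1 / \<tau>1) *\<^sub>R (x (k - 1) - x k)
          \<in> eps_subdiff (eps k) (\<lambda>u. ereal (Lhat Q c A b B d \<rho> u (y k)) + h1 u) (x k))
   \<and> (\<forall>k\<ge>1.
        eps k \<le> 1 / (8 * \<tau>1) * (norm (x k - x (k - 1)))\<^sup>2
      \<and> 1 / \<tau>2 * (norm (yaux A B \<tau>2 x y k - y k))\<^sup>2 \<le> 1 / (4 * \<tau>1) * (norm (x k - x (k - 1)))\<^sup>2)
   \<and> (\<forall>N\<ge>1.
        1 / (4 * \<tau>1) * (\<Sum>k=1..N. (norm (x k - x (k - 1)))\<^sup>2)
        + 1 / (2 * \<tau>2) * (\<Sum>k=1..N. (norm (y k - yaux A B \<tau>2 x y (k - 1)))\<^sup>2)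
        \<le> 1 / (2 * \<tau>1) * (norm (xs - x 0))\<^sup>2 + 1 / (2 * \<tau>2) * (norm (ys - y 0))\<^sup>2)"
proof -
  interpret pdhg Q c A b B d \<rho> \<tau>1 \<tau>2 x y
    by unfold_locales (fact Qsym rho tau x0 yk xk conv step1 step2)+
  have "eps = linearization_error"
    by (simp add: eps_def linearization_error_def fun_eq_iff)
  then show ?thesis
    using dual_residual_in_subdiff primal_residual_in_eps_subdiff linearization_error_le yaux_dist_le
      sum_step_lengths_le[OF saddle] by blast
qed

end
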